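(* Let $\lambda<\kappa$ be infinite cardinals and let $X$, $Y$ be non-trivial Banach spaces. Suppose $X$ is $\mathrm{ASQ}_{<\kappa}$ (respectively, $\mathrm{SQ}_{<\kappa}$). (a) If $H\subset L_\lambda(Y,X)$ is a closed subspace containing all operators $y^*\otimes x$ with $y^*\in Y^*$, $x\in X$, then $H$ is $\mathrm{ASQ}_{<\kappa}$ (respectively, $\mathrm{SQ}_{<\kappa}$). (b) If $H\subset L_\lambda(Y^*,X)$ is a closed subspace containing all operators $y\otimes x$ with $y\in Y$, $x\in X$, then $H$ is $\mathrm{ASQ}_{<\kappa}$ (respectively, $\mathrm{SQ}_{<\kappa}$).
   Context: $L_\lambda(Y,X)=\{T\in L(Y,X):\mathrm{dens}(T(Y))\le\lambda\}$ with the operator norm, where $\mathrm{dens}$ is the density character. For $y^*\in Y^*$ and $x\in X$, $y^*\otimes x$ is the operator $y\mapsto y^*(y)x$; for $y\in Y$, $y\otimes x$ is the operator $Y^*\ni y^*\mapsto y^*(y)x$. A Banach space $Z$ is $\mathrm{ASQ}_{<\kappa}$ if for every set $A\subset S_Z$ with $|A|<\kappa$ and every $\varepsilon>0$ there exists $y\in S_Z$ with $\|x\pm y\|\le 1+\varepsilon$ for all $x\in A$; $Z$ is $\mathrm{SQ}_{<\kappa}$ if for every such $A$ there exists $y\in S_Z$ with $\|x\pm y\|\le 1$ for all $x\in A$. *)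

theory Defs
  imports "HOL-Analysis.Analysis"
begin


text \<open>Cardinals are represented by (nonempty) sets of arbitrary type; comparison of
cardinalities uses the BNF cardinal order: |A| \<le>o |L| means card A \<le> card L.\<close>

definition dens_le :: "'a::metric_space set \<Rightarrow> 'l set \<Rightarrow> bool" where
  "dens_le S L \<longleftrightarrow> (\<exists>D\<subseteq>S. S \<subseteq> closure D \<and> ordLeq3 (card_of D) (card_of L))"

definition L_dens :: "'l set \<Rightarrow> ('y::real_normed_vector \<Rightarrow>\<^sub>L 'x::real_normed_vector) set" where
  "L_dens L = {T. dens_le (range (blinfun_apply T)) L}"

definition dual_tensor :: "('y::real_normed_vector \<Rightarrow>\<^sub>L real) \<Rightarrow> 'x::real_normed_vector \<Rightarrow> ('y \<Rightarrow>\<^sub>L 'x)" where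
  "dual_tensor ys x = Blinfun (\<lambda>y. blinfun_apply ys y *\<^sub>R x)"

definition point_tensor :: "'y::real_normed_vector \<Rightarrow> 'x::real_normed_vector \<Rightarrow> (('y \<Rightarrow>\<^sub>L real) \<Rightarrow>\<^sub>L 'x)" where
  "point_tensor y x = Blinfun (\<lambda>ys. blinfun_apply ys y *\<^sub>R x)"

definition ASQ_lt :: "'a::real_normed_vector set \<Rightarrow> 'k set \<Rightarrow> bool" where
  "ASQ_lt Z K \<longleftrightarrow> (\<forall>A. A \<subseteq> Z \<inter> sphere 0 1 \<longrightarrow> ordLess2 (card_of A) (card_of K) \<longrightarrow>
     (\<forall>\<epsilon>>0. \<exists>y\<in>Z \<inter> sphere 0 1. \<forall>x\<in>A. norm (x + y) \<le> 1 + \<epsilon> \<and> norm (x - y) \<le> 1 + \<epsilon>))"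

definition SQ_lt :: "'a::real_normed_vector set \<Rightarrow> 'k set \<Rightarrow> bool" where
  "SQ_lt Z K \<longleftrightarrow> (\<forall>A. A \<subseteq> Z \<inter> sphere 0 1 \<longrightarrow> ordLess2 (card_of A) (card_of K) \<longrightarrow>
     (\<exists>y\<in>Z \<inter> sphere 0 1. \<forall>x\<in>A. norm (x + y) \<le> 1 \<and> norm (x - y) \<le> 1))"

end

theory Submission
  imports Defs
begin

text \<open>Fewer than \<kappa> unit operators T in H have ranges of density at most \<lambda>, so together
they lie in the closure of one set D with |D| < \<kappa>. The (almost) square property of X, applied
to the directions of the nonzero elements of D, yields a unit vector x with
\<parallel>b \<plusminus> x\<parallel> \<le> 1 + \<epsilon> for all these directions b. By convexity and continuity this persists
for every point of norm at most 1 in the closure of D, in particular on the image of the unit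
ball under each T, so \<parallel>T \<plusminus> S\<parallel> \<le> 1 + \<epsilon> for every contraction S with range in span {x}.
The operators y* \<otimes> x and y \<otimes> x with unit vectors y* and y are such contractions of norm one.
Both the existence of a unit functional y* and the norm of y \<otimes> x rest on the Hahn-Banach
theorem, obtained by Zorn's lemma on graphs of norm-dominated linear functionals.\<close>

unbundle cardinal_syntax

definition norm_dominated_graph :: "('a::real_normed_vector \<times> real) set \<Rightarrow> bool" where
  "norm_dominated_graph G \<longleftrightarrow> subspace G \<and> (\<forall>(x, a)\<in>G. a \<le> norm x)"

lemma norm_dominated_graphD:
  assumes "norm_dominated_graph G"
  shows "subspace G" and "(x, a) \<in> G \<Longrightarrow> a \<le> norm x"
  using assms unfolding norm_dominated_graph_def by auto

lemma norm_dominated_graph_unique: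
  assumes G: "norm_dominated_graph G" and "(x, a) \<in> G" "(x, b) \<in> G"
  shows "a = b"
proof -
  have "(x, a) - (x, b) \<in> G" "(x, b) - (x, a) \<in> G"
    using assms subspace_diff norm_dominated_graphD(1) by blast+
  then have "a - b \<le> 0" "b - a \<le> 0"
    using norm_dominated_graphD(2)[OF G] by fastforce+
  then show ?thesis by simp
qed

lemma norm_dominated_graph_separating_value:
  fixes z :: "'a::real_normed_vector"
  assumes G: "norm_dominated_graph G"
  obtains c where "\<And>x a. (x, a) \<in> G \<Longrightarrow> a - norm (x - z) \<le> c"
    and "\<And>y b. (y, b) \<in> G \<Longrightarrow> c \<le> norm (y + z) - b"
proof -
  note sub = norm_dominated_graphD(1)[OF G] and dom = norm_dominated_graphD(2)[OF G]
  have zero: "(0, 0) \<in> G"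
    using subspace_0[OF sub] by (simp add: zero_prod_def)
  have sep: "a - norm (x - z) \<le> norm (y + z) - b" if "(x, a) \<in> G" "(y, b) \<in> G" for x a y b
  proof -
    have "a + b \<le> norm (x + y)"
      using dom subspace_add[OF sub that] by simp
    also have "\<dots> \<le> norm (x - z) + norm (y + z)"
      using norm_triangle_ineq[of "x - z" "y + z"] by simp
    finally show ?thesis by simp
  qed
  define c where "c = (SUP p\<in>G. snd p - norm (fst p - z))"
  have "bdd_above ((\<lambda>p. snd p - norm (fst p - z)) ` G)"
    by (rule bdd_aboveI2) (use sep zero in force)
  then have "a - norm (x - z) \<le> c" if "(x, a) \<in> G" for x a
    unfolding c_def using cSUP_upper[OF that] by fastforce
  moreover have "c \<le> norm (y + z) - b" if "(y, b) \<in> G" for y b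
    unfolding c_def using sep[OF _ that] zero by (intro cSUP_least) auto
  ultimately show ?thesis
    using that by blast
qed

lemma norm_dominated_graph_extension_value:
  fixes z :: "'a::real_normed_vector"
  assumes G: "norm_dominated_graph G"
  obtains c where "\<And>x a t. (x, a) \<in> G \<Longrightarrow> a + t * c \<le> norm (x + t *\<^sub>R z)"
proof -
  note sub = norm_dominated_graphD(1)[OF G]
  obtain c where lower: "\<And>x a. (x, a) \<in> G \<Longrightarrow> a - norm (x - z) \<le> c"
    and upper: "\<And>y b. (y, b) \<in> G \<Longrightarrow> c \<le> norm (y + z) - b"
    using norm_dominated_graph_separating_value[OF G] by blast
  have "a + t * c \<le> norm (x + t *\<^sub>R z)" if xa: "(x, a) \<in> G" for x a t
  proof (cases t "0::real" rule: linorder_cases)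
    case less
    have "(inverse (- t) *\<^sub>R x, inverse (- t) * a) \<in> G"
      using subspace_scale[OF sub xa, of "inverse (- t)"] by simp
    from lower[OF this] have "- t * (inverse (- t) * a - norm (inverse (- t) *\<^sub>R x - z)) \<le> - t * c"
      using less by (intro mult_left_mono) auto
    moreover have "x + t *\<^sub>R z = (- t) *\<^sub>R (inverse (- t) *\<^sub>R x - z)"
      using less by (simp add: algebra_simps)
    then have "norm (x + t *\<^sub>R z) = - t * norm (inverse (- t) *\<^sub>R x - z)"
      using less by simp
    ultimately show ?thesis
      using less by (simp add: algebra_simps)
  next
    case equal
    then show ?thesis
      using norm_dominated_graphD(2)[OF G xa] by simp
  next
    case greater
    have "(inverse t *\<^sub>R x, inverse t * a) \<in> G"
      using subspace_scale[OF sub xa, of "inverse t"] by simp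
    from upper[OF this] have "t * c \<le> t * (norm (inverse t *\<^sub>R x + z) - inverse t * a)"
      using greater by (intro mult_left_mono) auto
    moreover have "x + t *\<^sub>R z = t *\<^sub>R (inverse t *\<^sub>R x + z)"
      using greater by (simp add: algebra_simps)
    then have "norm (x + t *\<^sub>R z) = t * norm (inverse t *\<^sub>R x + z)"
      using greater by simp
    ultimately show ?thesis
      using greater by (simp add: algebra_simps)
  qed
  then show ?thesis
    using that by blast
qed

lemma norm_dominated_graph_extend:
  assumes G: "norm_dominated_graph G" and z: "z \<notin> Domain G"
  obtains G' where "norm_dominated_graph G'" "G \<subset> G'"
proof -
  obtain c where c: "\<And>x a t. (x, a) \<in> G \<Longrightarrow> a + t * c \<le> norm (x + t *\<^sub>R z)"
    using norm_dominated_graph_extension_value[OF G] by blast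
  define G' where "G' = {p + q | p q. p \<in> G \<and> q \<in> span {(z, c)}}"
  have sub: "subspace G"
    using norm_dominated_graphD(1)[OF G] .
  have in_G': "p + t *\<^sub>R (z, c) \<in> G'" if "p \<in> G" for p t
    unfolding G'_def span_singleton using that by blast
  have "subspace G'"
    unfolding G'_def using sub by (intro subspace_sums subspace_span)
  moreover have "a \<le> norm x" if xa: "(x, a) \<in> G'" for x a
  proof -
    obtain p t where "p \<in> G" "(x, a) = p + t *\<^sub>R (z, c)"
      using xa unfolding G'_def span_singleton by blast
    then show ?thesis
      using c[of "fst p" "snd p" t] by (cases p) simp
  qed
  ultimately have "norm_dominated_graph G'"
    unfolding norm_dominated_graph_def by blast
  moreover have "G \<subseteq> G'"
  proof
    fix p
    assume "p \<in> G"
    then show "p \<in> G'"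
      using in_G'[of p 0] by (simp add: zero_prod_def[symmetric])
  qed
  moreover have "(z, c) \<in> G'"
    using in_G'[OF subspace_0[OF sub], of 1] by simp
  moreover have "(z, c) \<notin> G"
    using z by (simp add: Domain_iff)
  ultimately show ?thesis
    using that by blast
qed

lemma subspace_Union_chain:
  assumes "\<C> \<noteq> {}" "\<And>S. S \<in> \<C> \<Longrightarrow> subspace S"
    and chain: "\<And>S T. S \<in> \<C> \<Longrightarrow> T \<in> \<C> \<Longrightarrow> S \<subseteq> T \<or> T \<subseteq> S"
  shows "subspace (\<Union>\<C>)"
  unfolding subspace_def
proof (intro conjI ballI allI)
  show "0 \<in> \<Union>\<C>"
    using assms(1,2) subspace_0 by blast
  show "c *\<^sub>R x \<in> \<Union>\<C>" if "x \<in> \<Union>\<C>" for c x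
    using that assms(2) subspace_scale by blast
  show "x + y \<in> \<Union>\<C>" if xy: "x \<in> \<Union>\<C>" "y \<in> \<Union>\<C>" for x y
  proof -
    obtain S T where ST: "S \<in> \<C>" "T \<in> \<C>" "x \<in> S" "y \<in> T"
      using xy by blast
    then show ?thesis
      using chain[of S T] assms(2) subspace_add by blast
  qed
qed

lemma norm_dominated_graph_Union_chain:
  assumes "\<C> \<noteq> {}" "\<And>G. G \<in> \<C> \<Longrightarrow> norm_dominated_graph G"
    and "\<And>S T. S \<in> \<C> \<Longrightarrow> T \<in> \<C> \<Longrightarrow> S \<subseteq> T \<or> T \<subseteq> S"
  shows "norm_dominated_graph (\<Union>\<C>)"
  using subspace_Union_chain[OF assms(1) _ assms(3)] assms(2)
  unfolding norm_dominated_graph_def by blast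

lemma norm_dominated_graph_blinfun:
  assumes G: "norm_dominated_graph G" and total: "\<And>x. x \<in> Domain G"
  obtains f :: "'a::real_normed_vector \<Rightarrow>\<^sub>L real" where "norm f \<le> 1" "\<And>x a. (x, a) \<in> G \<Longrightarrow> f x = a"
proof -
  note sub = norm_dominated_graphD(1)[OF G]
  define g where "g x = (THE a. (x, a) \<in> G)" for x
  have graph: "(x, a) \<in> G \<longleftrightarrow> g x = a" for x a
  proof -
    have ex1: "\<exists>!a. (x, a) \<in> G"
      using total[of x] norm_dominated_graph_unique[OF G] by blast
    show ?thesis
    proof
      show "g x = a" if "(x, a) \<in> G"
        unfolding g_def using ex1 that by (rule the1_equality)
      show "(x, a) \<in> G" if "g x = a"
        using theI'[OF ex1] that unfolding g_def by simp
    qed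
  qed
  have add: "g (x + y) = g x + g y" for x y
    using subspace_add[OF sub, of "(x, g x)" "(y, g y)"] graph by simp
  have scale: "g (r *\<^sub>R x) = r * g x" for r x
    using subspace_scale[OF sub, of "(x, g x)" r] graph by simp
  have dominated: "g x \<le> norm x" for x
    using norm_dominated_graphD(2)[OF G] graph by simp
  have bound: "\<bar>g x\<bar> \<le> norm x" for x
    using dominated[of x] dominated[of "- x"] scale[of "-1" x] by simp
  have "bounded_linear g"
    by (rule bounded_linear_intro[where K = 1]) (use add scale bound in auto)
  then have g_apply: "blinfun_apply (Blinfun g) = g"
    by (rule bounded_linear_Blinfun_apply)
  have "norm (Blinfun g) \<le> 1"
    by (rule norm_blinfun_bound) (simp_all add: g_apply bound)
  then show ?thesis
    using that[of "Blinfun g"] graph g_apply by simp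
qed

theorem exists_norming_functional:
  fixes y :: "'a::real_normed_vector"
  obtains f :: "'a \<Rightarrow>\<^sub>L real" where "norm f \<le> 1" "f y = norm y"
proof -
  define G\<^sub>0 where "G\<^sub>0 = span {(y, norm y)}"
  define \<G> where "\<G> = {G. norm_dominated_graph G \<and> G\<^sub>0 \<subseteq> G}"
  have G\<^sub>0: "norm_dominated_graph G\<^sub>0"
    unfolding norm_dominated_graph_def
  proof
    show "subspace G\<^sub>0"
      unfolding G\<^sub>0_def by (rule subspace_span)
    have "k * norm y \<le> norm (k *\<^sub>R y)" for k
      by (simp add: mult_right_mono)
    then show "\<forall>(x, a)\<in>G\<^sub>0. a \<le> norm x"
      by (auto simp: G\<^sub>0_def span_singleton)
  qed
  have "\<exists>M\<in>\<G>. \<forall>G\<in>\<G>. M \<subseteq> G \<longrightarrow> G = M"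
  proof (rule subset_Zorn_nonempty)
    show "\<G> \<noteq> {}"
      using G\<^sub>0 unfolding \<G>_def by blast
    show "\<Union>\<C> \<in> \<G>" if "\<C> \<noteq> {}" "subset.chain \<G> \<C>" for \<C>
    proof -
      have sub: "\<C> \<subseteq> \<G>" and chain: "\<And>S T. S \<in> \<C> \<Longrightarrow> T \<in> \<C> \<Longrightarrow> S \<subseteq> T \<or> T \<subseteq> S"
        using that(2) unfolding subset_chain_def by auto
      have "norm_dominated_graph (\<Union>\<C>)"
        using norm_dominated_graph_Union_chain[OF that(1) _ chain] sub unfolding \<G>_def by blast
      moreover have "G\<^sub>0 \<subseteq> \<Union>\<C>"
        using sub that(1) unfolding \<G>_def by blast
      ultimately show ?thesis
        unfolding \<G>_def by simp
    qed
  qed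
  then obtain M where "M \<in> \<G>" and maximal: "\<And>G. G \<in> \<G> \<Longrightarrow> M \<subseteq> G \<Longrightarrow> G = M"
    by blast
  then have M: "norm_dominated_graph M" "G\<^sub>0 \<subseteq> M"
    unfolding \<G>_def by simp_all
  have "x \<in> Domain M" for x
  proof (rule ccontr)
    assume "x \<notin> Domain M"
    then obtain G where "norm_dominated_graph G" "M \<subset> G"
      using norm_dominated_graph_extend[OF M(1)] by blast
    moreover from this have "G \<in> \<G>"
      using M(2) unfolding \<G>_def by auto
    ultimately show False
      using maximal by blast
  qed
  then obtain f :: "'a \<Rightarrow>\<^sub>L real" where "norm f \<le> 1" "\<And>x a. (x, a) \<in> M \<Longrightarrow> f x = a"
    using norm_dominated_graph_blinfun[OF M(1)] by blast
  moreover have "(y, norm y) \<in> M"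
    using M(2) span_base unfolding G\<^sub>0_def by blast
  ultimately show ?thesis
    using that by blast
qed

lemma dual_tensor_apply [simp]: "dual_tensor f x u = f u *\<^sub>R x"
proof -
  have "bounded_linear (\<lambda>u. f u *\<^sub>R x)"
    by (rule bounded_linear_compose[OF bounded_linear_scaleR_left blinfun.bounded_linear_right])
  then show ?thesis
    unfolding dual_tensor_def by (simp add: bounded_linear_Blinfun_apply)
qed

lemma point_tensor_apply [simp]: "point_tensor y x g = g y *\<^sub>R x"
proof -
  have "bounded_linear (\<lambda>g. blinfun_apply g y *\<^sub>R x)"
    by (rule bounded_linear_compose[OF bounded_linear_scaleR_left blinfun.bounded_linear_left])
  then show ?thesis
    unfolding point_tensor_def by (simp add: bounded_linear_Blinfun_apply)
qed

lemma norm_dual_tensor: "norm (dual_tensor f x) = norm f * norm x"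
proof (rule antisym)
  show "norm (dual_tensor f x) \<le> norm f * norm x"
  proof (rule norm_blinfun_bound)
    fix u
    show "norm (dual_tensor f x u) \<le> norm f * norm x * norm u"
      using mult_right_mono[OF norm_blinfun[of f u], of "norm x"] by (simp add: ac_simps)
  qed simp
  show "norm f * norm x \<le> norm (dual_tensor f x)"
  proof (cases "x = 0")
    case False
    have "norm f \<le> norm (dual_tensor f x) / norm x"
    proof (rule norm_blinfun_bound)
      fix u
      have "\<bar>f u\<bar> * norm x \<le> norm (dual_tensor f x) * norm u"
        using norm_blinfun[of "dual_tensor f x" u] by simp
      then show "norm (f u) \<le> norm (dual_tensor f x) / norm x * norm u"
        using False by (simp add: field_simps)
    qed simp
    then show ?thesis
      using False by (simp add: field_simps)
  qed simp
qed

lemma norm_point_tensor: "norm (point_tensor y x) = norm y * norm x"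
proof (rule antisym)
  show "norm (point_tensor y x) \<le> norm y * norm x"
  proof (rule norm_blinfun_bound)
    fix g :: "'a \<Rightarrow>\<^sub>L real"
    show "norm (point_tensor y x g) \<le> norm y * norm x * norm g"
      using mult_right_mono[OF norm_blinfun[of g y], of "norm x"] by (simp add: ac_simps)
  qed simp
  obtain f :: "'a \<Rightarrow>\<^sub>L real" where f: "norm f \<le> 1" "f y = norm y"
    by (rule exists_norming_functional)
  have "norm y * norm x = norm (point_tensor y x f)"
    using f(2) by simp
  also have "\<dots> \<le> norm (point_tensor y x) * norm f"
    by (rule norm_blinfun)
  also have "\<dots> \<le> norm (point_tensor y x)"
    using f(1) by (simp add: mult_left_le)
  finally show "norm y * norm x \<le> norm (point_tensor y x)" .
qed

lemma norm_add_scaleR_le: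
  fixes w x :: "'a::real_normed_vector"
  assumes "norm (w + x) \<le> r" "norm (w - x) \<le> r" "\<bar>t\<bar> \<le> 1"
  shows "norm (w + t *\<^sub>R x) \<le> r"
proof -
  define p q where "p = (1 + t) / 2" and "q = (1 - t) / 2"
  have "p \<ge> 0" "q \<ge> 0" "p + q = 1" "p - q = t"
    using assms(3) unfolding p_def q_def by (auto simp: abs_le_iff field_simps)
  moreover have "p *\<^sub>R (w + x) + q *\<^sub>R (w - x) = (p + q) *\<^sub>R w + (p - q) *\<^sub>R x"
    by (simp add: algebra_simps)
  ultimately have "norm (w + t *\<^sub>R x) \<le> p * norm (w + x) + q * norm (w - x)"
    using norm_triangle_ineq[of "p *\<^sub>R (w + x)" "q *\<^sub>R (w - x)"] by simp
  also have "\<dots> \<le> p * r + q * r"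
    using assms \<open>p \<ge> 0\<close> \<open>q \<ge> 0\<close> by (intro add_mono mult_left_mono) auto
  finally show ?thesis
    using \<open>p + q = 1\<close> by (simp flip: distrib_right)
qed

lemma scaleR_norm_sgn: "norm x *\<^sub>R sgn x = (x::'a::real_normed_vector)"
  by (cases "x = 0") (simp_all add: sgn_div_norm)

lemma norm_add_le_of_sgn:
  fixes d x :: "'a::real_normed_vector"
  assumes x: "norm x = 1" and e: "e \<ge> 0" and d: "norm (sgn d + x) \<le> 1 + e"
  shows "norm (d + x) \<le> e + max 1 (norm d)"
proof (cases "norm d \<le> 1")
  case True
  have "d + x = norm d *\<^sub>R (sgn d + x) + (1 - norm d) *\<^sub>R x"
    by (simp add: algebra_simps scaleR_norm_sgn)
  then have "norm (d + x) \<le> norm d * norm (sgn d + x) + (1 - norm d)"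
    using norm_triangle_ineq[of "norm d *\<^sub>R (sgn d + x)" "(1 - norm d) *\<^sub>R x"] True x by simp
  also have "\<dots> \<le> norm d * (1 + e) + (1 - norm d)"
    using d by (simp add: mult_left_mono)
  also have "\<dots> \<le> 1 + e"
    using True e mult_left_le_one_le[of e "norm d"] by (simp add: algebra_simps)
  finally show ?thesis
    by simp
next
  case False
  have "d + x = (sgn d + x) + (norm d - 1) *\<^sub>R sgn d"
    by (simp add: algebra_simps scaleR_norm_sgn)
  then have "norm (d + x) \<le> norm (sgn d + x) + norm ((norm d - 1) *\<^sub>R sgn d)"
    by (metis norm_triangle_ineq)
  also have "norm ((norm d - 1) *\<^sub>R sgn d) = norm d - 1"
    using False by (auto simp: norm_sgn)
  finally show ?thesis
    using d by simp
qed

text \<open>Points of norm at most 1 in the closure of D may be limits of longer vectors of D, hence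
the bound in terms of \<^term>\<open>max 1 (norm z)\<close>.\<close>

lemma closure_norm_add_le:
  fixes x :: "'a::real_normed_vector"
  assumes "norm x = 1" "e \<ge> 0" "\<forall>d\<in>D. norm (sgn d + x) \<le> 1 + e" "z \<in> closure D"
  shows "norm (z + x) \<le> e + max 1 (norm z)"
proof -
  have "closure D \<subseteq> {z. norm (z + x) \<le> e + max 1 (norm z)}"
    using assms(1-3) norm_add_le_of_sgn
    by (intro closure_minimal closed_Collect_le continuous_intros) auto
  then show ?thesis
    using assms(4) by blast
qed

lemma norm_add_rank_one_le:
  fixes T S :: "'a::real_normed_vector \<Rightarrow>\<^sub>L 'b::real_normed_vector"
  assumes x: "norm x = 1" and e: "e \<ge> 0"
    and D: "\<forall>d\<in>D. norm (sgn d + x) \<le> 1 + e \<and> norm (sgn d - x) \<le> 1 + e"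
    and T: "norm T \<le> 1" "range T \<subseteq> closure D"
    and S: "norm S \<le> 1" "range S \<subseteq> span {x}"
  shows "norm (T + S) \<le> 1 + e"
proof (rule norm_blinfun_bound)
  have near: "norm (z + t *\<^sub>R x) \<le> 1 + e" if z: "z \<in> closure D" "norm z \<le> 1" and t: "\<bar>t\<bar> \<le> 1" for z t
  proof (rule norm_add_scaleR_le[OF _ _ t])
    show "norm (z + x) \<le> 1 + e"
      using closure_norm_add_le[OF x e _ z(1)] D z(2) by auto
    show "norm (z - x) \<le> 1 + e"
      using closure_norm_add_le[of "- x" e D, OF _ e _ z(1)] x D z(2) by auto
  qed
  fix u
  obtain t where t: "S u = t *\<^sub>R x"
    using S(2) unfolding span_singleton by blast
  have "\<bar>t\<bar> \<le> norm u"
    using norm_blinfun[of S u] S(1) x t mult_left_le_one_le[of "norm u" "norm S"] by simp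
  show "norm ((T + S) u) \<le> (1 + e) * norm u"
  proof (cases "u = 0")
    case False
    define z where "z = T (u /\<^sub>R norm u)"
    have "z \<in> closure D"
      using T(2) unfolding z_def by blast
    moreover have "norm z \<le> 1"
      using norm_blinfun[of T "u /\<^sub>R norm u"] T(1) False mult_left_le_one_le[of 1 "norm T"]
      unfolding z_def by simp
    moreover have "\<bar>t / norm u\<bar> \<le> 1"
      using \<open>\<bar>t\<bar> \<le> norm u\<close> False by (simp add: abs_divide)
    ultimately have "norm (z + (t / norm u) *\<^sub>R x) \<le> 1 + e"
      by (rule near)
    moreover have "(T + S) u = norm u *\<^sub>R (z + (t / norm u) *\<^sub>R x)"
      using False by (simp add: z_def t blinfun.scaleR_right plus_blinfun.rep_eq algebra_simps)
    ultimately show ?thesis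
      using False by (simp add: mult.commute mult_left_mono)
  qed simp
qed (use e in simp)

lemma dens_le_UNION_ordLess:
  fixes F :: "'i \<Rightarrow> 'a::metric_space set" and L :: "'l set" and K :: "'k set"
  assumes F: "\<And>i. i \<in> I \<Longrightarrow> dens_le (F i) L"
    and L: "infinite L" "|L| <o |K|" and I: "|I| <o |K|"
  shows "\<exists>D. (\<forall>i\<in>I. F i \<subseteq> closure D) \<and> |D| <o |K|"
proof -
  obtain E where E: "\<And>i. i \<in> I \<Longrightarrow> F i \<subseteq> closure (E i) \<and> |E i| \<le>o |L|"
    using F unfolding dens_le_def by metis
  have "F i \<subseteq> closure (\<Union>i\<in>I. E i)" if "i \<in> I" for i
    using E[OF that] closure_mono[of "E i" "\<Union>i\<in>I. E i"] that by blast
  moreover have "|\<Union>i\<in>I. E i| <o |K|"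
  proof (cases "|I| \<le>o |L|")
    case True
    then have "|\<Union>i\<in>I. E i| \<le>o |L|"
      using card_of_UNION_ordLeq_infinite[OF L(1) True] E by blast
    then show ?thesis
      using L(2) by (rule ordLeq_ordLess_trans)
  next
    case False
    then have LI: "|L| \<le>o |I|"
      using ordLeq_total[OF card_of_Well_order card_of_Well_order] by blast
    then have "infinite I"
      using card_of_ordLeq_infinite L(1) by blast
    moreover have "\<forall>i\<in>I. |E i| \<le>o |I|"
      using E LI ordLeq_transitive by blast
    ultimately have "|\<Union>i\<in>I. E i| \<le>o |I|"
      using card_of_UNION_ordLeq_infinite[OF _ ordLeq_refl[OF card_of_Card_order]] by blast
    then show ?thesis
      using I by (rule ordLeq_ordLess_trans)
  qed
  ultimately show ?thesis
    by blast
qed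

definition SQ_lt_margin :: "'a::real_normed_vector set \<Rightarrow> 'k set \<Rightarrow> real \<Rightarrow> bool" where
  "SQ_lt_margin Z K e \<longleftrightarrow> (\<forall>A. A \<subseteq> Z \<inter> sphere 0 1 \<longrightarrow> |A| <o |K| \<longrightarrow>
     (\<exists>y\<in>Z \<inter> sphere 0 1. \<forall>x\<in>A. norm (x + y) \<le> 1 + e \<and> norm (x - y) \<le> 1 + e))"

lemma ASQ_lt_iff_SQ_lt_margin: "ASQ_lt Z K \<longleftrightarrow> (\<forall>e>0. SQ_lt_margin Z K e)"
  unfolding ASQ_lt_def SQ_lt_margin_def by blast

lemma SQ_lt_iff_SQ_lt_margin: "SQ_lt Z K \<longleftrightarrow> SQ_lt_margin Z K 0"
  unfolding SQ_lt_def SQ_lt_margin_def by simp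

lemma SQ_lt_margin_sgn_near:
  fixes D :: "'a::real_normed_vector set" and K :: "'k set"
  assumes X: "SQ_lt_margin (UNIV :: 'a set) K e" and e: "e \<ge> 0" and D: "|D| <o |K|"
  obtains x where "norm x = 1" "\<forall>d\<in>D. norm (sgn d + x) \<le> 1 + e \<and> norm (sgn d - x) \<le> 1 + e"
proof -
  define B where "B = sgn ` (D - {0})"
  have "|B| \<le>o |D - {0}|"
    unfolding B_def by (rule card_of_image)
  also have "|D - {0}| \<le>o |D|"
    by (rule card_of_mono1) blast
  finally have "|B| <o |K|"
    using D by (rule ordLeq_ordLess_trans)
  moreover have "B \<subseteq> UNIV \<inter> sphere 0 1"
    unfolding B_def by (auto simp: norm_sgn split: if_splits)
  ultimately obtain x where x: "norm x = 1"
    and near: "\<forall>b\<in>B. norm (b + x) \<le> 1 + e \<and> norm (b - x) \<le> 1 + e"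
    using X unfolding SQ_lt_margin_def by (meson IntD2 mem_sphere_0)
  have "norm (sgn d + x) \<le> 1 + e \<and> norm (sgn d - x) \<le> 1 + e" if "d \<in> D" for d
    using that near x e unfolding B_def by (cases "d = 0") auto
  then show ?thesis
    using that x by blast
qed

lemma SQ_lt_margin_operator_space:
  fixes H :: "('a::real_normed_vector \<Rightarrow>\<^sub>L 'b::real_normed_vector) set"
    and L :: "'l set" and K :: "'k set"
  assumes H: "H \<subseteq> L_dens L" and L: "infinite L" "|L| <o |K|"
    and rank_one: "\<And>x. norm x = 1 \<Longrightarrow> \<exists>S\<in>H. norm S = 1 \<and> range (blinfun_apply S) \<subseteq> span {x}"
    and e: "e \<ge> 0" and X: "SQ_lt_margin (UNIV :: 'b set) K e"
  shows "SQ_lt_margin H K e"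
  unfolding SQ_lt_margin_def
proof (intro allI impI)
  fix A
  assume A: "A \<subseteq> H \<inter> sphere 0 1" "|A| <o |K|"
  have "dens_le (range (blinfun_apply T)) L" if "T \<in> A" for T
    using A(1) H that unfolding L_dens_def by blast
  then obtain D where D: "\<And>T. T \<in> A \<Longrightarrow> range (blinfun_apply T) \<subseteq> closure D" "|D| <o |K|"
    using dens_le_UNION_ordLess[of A "\<lambda>T. range (blinfun_apply T)", OF _ L A(2)] by blast
  obtain x where x: "norm x = 1"
    and D_near: "\<forall>d\<in>D. norm (sgn d + x) \<le> 1 + e \<and> norm (sgn d - x) \<le> 1 + e"
    using SQ_lt_margin_sgn_near[OF X e D(2)] by blast
  obtain S where S: "S \<in> H" "norm S = 1" "range (blinfun_apply S) \<subseteq> span {x}"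
    using rank_one[OF x] by blast
  have "range (blinfun_apply (- S)) \<subseteq> span {x}"
    using S(3) span_neg by (auto simp: uminus_blinfun.rep_eq)
  have "norm (T + S) \<le> 1 + e \<and> norm (T - S) \<le> 1 + e" if "T \<in> A" for T
  proof -
    have T: "norm T \<le> 1"
      using that A(1) by auto
    have "norm (T + S) \<le> 1 + e"
      by (rule norm_add_rank_one_le[OF x e D_near T D(1)[OF that]]) (use S in simp_all)
    moreover have "norm (T + - S) \<le> 1 + e"
      by (rule norm_add_rank_one_le[OF x e D_near T D(1)[OF that]])
        (use S \<open>range (blinfun_apply (- S)) \<subseteq> span {x}\<close> in simp_all)
    ultimately show ?thesis
      by simp
  qed
  then show "\<exists>y\<in>H \<inter> sphere 0 1. \<forall>T\<in>A. norm (T + y) \<le> 1 + e \<and> norm (T - y) \<le> 1 + e"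
    using S(1,2) by (intro bexI[of _ S]) auto
qed

lemma ASQ_lt_SQ_lt_operator_space:
  fixes H :: "('a::real_normed_vector \<Rightarrow>\<^sub>L 'b::real_normed_vector) set"
    and L :: "'l set" and K :: "'k set"
  assumes "H \<subseteq> L_dens L" "infinite L" "|L| <o |K|"
    and "\<And>x. norm x = 1 \<Longrightarrow> \<exists>S\<in>H. norm S = 1 \<and> range (blinfun_apply S) \<subseteq> span {x}"
  shows "(ASQ_lt (UNIV :: 'b set) K \<longrightarrow> ASQ_lt H K) \<and> (SQ_lt (UNIV :: 'b set) K \<longrightarrow> SQ_lt H K)"
  using SQ_lt_margin_operator_space[OF assms]
  by (auto simp: ASQ_lt_iff_SQ_lt_margin SQ_lt_iff_SQ_lt_margin)

theorem theorem4p6: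
  fixes Lam :: "'l set" and Kap :: "'k set"
  assumes "infinite Lam" and "infinite Kap" and "ordLess2 (card_of Lam) (card_of Kap)"
    and "\<exists>x::'x::banach. x \<noteq> 0" and "\<exists>y::'y::banach. y \<noteq> 0"
  shows
    "(\<forall>H :: ('y \<Rightarrow>\<^sub>L 'x) set.
        closed H \<and> subspace H \<and> H \<subseteq> L_dens Lam \<and>
        (\<forall>ys x. dual_tensor ys x \<in> H) \<longrightarrow>
        (ASQ_lt (UNIV :: 'x set) Kap \<longrightarrow> ASQ_lt H Kap) \<and>
        (SQ_lt (UNIV :: 'x set) Kap \<longrightarrow> SQ_lt H Kap))
   \<and>
    (\<forall>H :: (('y \<Rightarrow>\<^sub>L real) \<Rightarrow>\<^sub>L 'x) set.
        closed H \<and> subspace H \<and> H \<subseteq> L_dens Lam \<and>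
        (\<forall>y x. point_tensor y x \<in> H) \<longrightarrow>
        (ASQ_lt (UNIV :: 'x set) Kap \<longrightarrow> ASQ_lt H Kap) \<and>
        (SQ_lt (UNIV :: 'x set) Kap \<longrightarrow> SQ_lt H Kap))"
proof -
  obtain y :: 'y where "y \<noteq> 0"
    using assms(5) by blast
  then have u: "norm (sgn y) = 1"
    by (simp add: norm_sgn)
  obtain f :: "'y \<Rightarrow>\<^sub>L real" where "norm f \<le> 1" "f (sgn y) = norm (sgn y)"
    by (rule exists_norming_functional)
  then have f: "norm f = 1"
    using norm_blinfun[of f "sgn y"] u by simp
  have span: "c *\<^sub>R x \<in> span {x}" for c and x :: 'x
    by (simp add: span_base span_scale)
  show ?thesis
  proof (rule conjI; intro allI impI)
    fix H :: "('y \<Rightarrow>\<^sub>L 'x) set"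
    assume H: "closed H \<and> subspace H \<and> H \<subseteq> L_dens Lam \<and> (\<forall>ys x. dual_tensor ys x \<in> H)"
    show "(ASQ_lt (UNIV :: 'x set) Kap \<longrightarrow> ASQ_lt H Kap) \<and> (SQ_lt (UNIV :: 'x set) Kap \<longrightarrow> SQ_lt H Kap)"
      using H by (intro ASQ_lt_SQ_lt_operator_space[OF _ assms(1,3)] bexI[of _ "dual_tensor f _"])
        (auto simp: norm_dual_tensor f span)
  next
    fix H :: "(('y \<Rightarrow>\<^sub>L real) \<Rightarrow>\<^sub>L 'x) set"
    assume H: "closed H \<and> subspace H \<and> H \<subseteq> L_dens Lam \<and> (\<forall>y x. point_tensor y x \<in> H)"
    show "(ASQ_lt (UNIV :: 'x set) Kap \<longrightarrow> ASQ_lt H Kap) \<and> (SQ_lt (UNIV :: 'x set) Kap \<longrightarrow> SQ_lt H Kap)"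
      using H by (intro ASQ_lt_SQ_lt_operator_space[OF _ assms(1,3)] bexI[of _ "point_tensor (sgn y) _"])
        (auto simp: norm_point_tensor u span)
  qed
qed

end
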